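(* Let $(R,\cdot,\mathfrak e)$ be a symmetric partial $A$-module algebra such that the algebra $A\cdot R$ has nondegenerate product. Then $A\cdot R=\mathfrak e(A)R$ and $A\cdot R=R\,\mathfrak e(A)$.
   Context: $\Bbbk$ is a field; $M(R)$ is the multiplier algebra of an algebra $R$ with nondegenerate product. $A$ is a regular multiplier Hopf algebra with comultiplication $\Delta$, counit $\varepsilon$, bijective antipode $S$ (Sweedler notation with covering conventions). $A\cdot R$ is the linear span of the elements $a\cdot x$; $\mathfrak e(A)R$ and $R\mathfrak e(A)$ are the spans of $\mathfrak e(a)x$, resp. $x\mathfrak e(a)$. A partial $A$-module algebra is a triple $(R,\cdot,\mathfrak e)$, $\cdot:A\otimes R\to R$ and $\mathfrak e:A\to M(R)$ linear, such that for all $a,b\in A$, $x,y\in R$: (i) $a\cdot(x(b\cdot y))=(a_{(1)}\cdot x)(a_{(2)}b\cdot y)$; (ii) $\mathfrak e(a)(b\cdot x)=a_{(1)}\cdot(S(a_{(2)})b\cdot x)$ and $\mathfrak e(A)R\subseteq A\cdot R$; (iii) given $a_1,\dots,a_n\in A$, $x_1,\dots,x_m\in R$ there is $b\in A$ with $a_ib=a_i=ba_i$ and $a_i\cdot x_j=a_i\cdot(b\cdot x_j)$; (iv) $A\cdot x=0$ implies $x=0$. It is symmetric if moreover (v) $a\cdot((b\cdot x)y)=(a_{(1)}b\cdot x)(a_{(2)}\cdot y)$; (vi) $(b\cdot x)\mathfrak e(a)=a_{(2)}\cdot(S^{-1}(a_{(1)})b\cdot x)$; (vii) $R\mathfrak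 e(A)\subseteq A\cdot R$. *)

theory Defs
  imports Complex_Main
begin

definition bilin ::
  "('k::field \<Rightarrow> 'a::ab_group_add \<Rightarrow> 'a) \<Rightarrow> ('k \<Rightarrow> 'b::ab_group_add \<Rightarrow> 'b) \<Rightarrow>
   ('k \<Rightarrow> 'c::ab_group_add \<Rightarrow> 'c) \<Rightarrow> ('a \<Rightarrow> 'b \<Rightarrow> 'c) \<Rightarrow> bool" where
  "bilin s1 s2 s3 f \<longleftrightarrow>
     (\<forall>x y z. f (x + y) z = f x z + f y z) \<and> (\<forall>c x z. f (s1 c x) z = s3 c (f x z)) \<and>
     (\<forall>x y z. f x (y + z) = f x y + f x z) \<and> (\<forall>c x z. f x (s2 c z) = s3 c (f x z))"

definition trilin ::
  "('k::field \<Rightarrow> 'a::ab_group_add \<Rightarrow> 'a) \<Rightarrow> ('a \<Rightarrow> 'a \<Rightarrow> 'a \<Rightarrow> 'k) \<Rightarrow> bool" where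
  "trilin s f \<longleftrightarrow>
     (\<forall>x y z w. f (x + y) z w = f x z w + f y z w) \<and> (\<forall>c x z w. f (s c x) z w = c * f x z w) \<and>
     (\<forall>x y z w. f x (y + z) w = f x y w + f x z w) \<and> (\<forall>c x z w. f x (s c z) w = c * f x z w) \<and>
     (\<forall>x y z w. f x y (z + w) = f x y z + f x y w) \<and> (\<forall>c x z w. f x z (s c w) = c * f x z w)"

definition algebra ::
  "('k::field \<Rightarrow> 'a::ab_group_add \<Rightarrow> 'a) \<Rightarrow> ('a \<Rightarrow> 'a \<Rightarrow> 'a) \<Rightarrow> bool" where
  "algebra s m \<longleftrightarrow> Vector_Spaces.vector_space s \<and> bilin s s s m \<and> (\<forall>x y z. m (m x y) z = m x (m y z))"

definition nondeg_on :: "('a \<Rightarrow> 'a \<Rightarrow> 'a::zero) \<Rightarrow> 'a set \<Rightarrow> bool" where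
  "nondeg_on m B \<longleftrightarrow>
     (\<forall>x\<in>B. (\<forall>y\<in>B. m x y = 0) \<longrightarrow> x = 0) \<and> (\<forall>x\<in>B. (\<forall>y\<in>B. m y x = 0) \<longrightarrow> x = 0)"

text \<open>An element of M(R) is a pair (l, r) of linear maps R \<rightarrow> R with
  l(xy) = l(x)y, r(xy) = x r(y), x l(y) = r(x) y; l x is written (l,r) x and
  r x is written x (l,r).\<close>
definition multiplier ::
  "('k::field \<Rightarrow> 'r::ab_group_add \<Rightarrow> 'r) \<Rightarrow> ('r \<Rightarrow> 'r \<Rightarrow> 'r) \<Rightarrow> ('r \<Rightarrow> 'r) \<Rightarrow> ('r \<Rightarrow> 'r) \<Rightarrow> bool" where
  "multiplier s m l r \<longleftrightarrow> Vector_Spaces.linear s s l \<and> Vector_Spaces.linear s s r \<and>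
     (\<forall>x y. l (m x y) = m (l x) y) \<and> (\<forall>x y. r (m x y) = m x (r y)) \<and>
     (\<forall>x y. m x (l y) = m (r x) y)"

text \<open>An element of A \<otimes> A is represented by a finite formal sum
  \<Sum> a_i \<otimes> b_i, i.e. a list of pairs. Two such lists denote the same tensor iff
  every bilinear form A \<times> A \<rightarrow> k takes the same value on them (the dual of
  A \<otimes> A is the space of bilinear forms, and over a field it separates points).
  Same for A \<otimes> A \<otimes> A with trilinear forms.\<close>

type_synonym 'a tens = "('a \<times> 'a) list"
type_synonym 'a tens3 = "('a \<times> 'a \<times> 'a) list"

definition teval :: "('a \<Rightarrow> 'a \<Rightarrow> 'c::comm_monoid_add) \<Rightarrow> 'a tens \<Rightarrow> 'c" where
  "teval f t = sum_list (map (\<lambda>(x, y). f x y) t)"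

definition teval3 :: "('a \<Rightarrow> 'a \<Rightarrow> 'a \<Rightarrow> 'c::comm_monoid_add) \<Rightarrow> 'a tens3 \<Rightarrow> 'c" where
  "teval3 f t = sum_list (map (\<lambda>(x, y, z). f x y z) t)"

definition teq :: "('k::field \<Rightarrow> 'a::ab_group_add \<Rightarrow> 'a) \<Rightarrow> 'a tens \<Rightarrow> 'a tens \<Rightarrow> bool" where
  "teq s t u \<longleftrightarrow> (\<forall>f :: 'a \<Rightarrow> 'a \<Rightarrow> 'k. bilin s s (*) f \<longrightarrow> teval f t = teval f u)"

definition teq3 :: "('k::field \<Rightarrow> 'a::ab_group_add \<Rightarrow> 'a) \<Rightarrow> 'a tens3 \<Rightarrow> 'a tens3 \<Rightarrow> bool" where
  "teq3 s t u \<longleftrightarrow> (\<forall>f :: 'a \<Rightarrow> 'a \<Rightarrow> 'a \<Rightarrow> 'k. trilin s f \<longrightarrow> teval3 f t = teval3 f u)"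

definition tscale :: "('k \<Rightarrow> 'a \<Rightarrow> 'a) \<Rightarrow> 'k \<Rightarrow> 'a tens \<Rightarrow> 'a tens" where
  "tscale s c t = map (\<lambda>(x, y). (s c x, y)) t"

definition tmul :: "('a \<Rightarrow> 'a \<Rightarrow> 'a) \<Rightarrow> 'a tens \<Rightarrow> 'a tens \<Rightarrow> 'a tens" where
  "tmul m t u = concat (map (\<lambda>(a, b). map (\<lambda>(c, d). (m a c, m b d)) u) t)"

text \<open>The comultiplication \<Delta> : A \<rightarrow> M(A \<otimes> A) is given by the pair (DL, DR):
  DL a t = \<Delta>(a) t and DR a t = t \<Delta>(a) for t \<in> A \<otimes> A.\<close>

definition tmultiplier ::
  "('k::field \<Rightarrow> 'a::ab_group_add \<Rightarrow> 'a) \<Rightarrow> ('a \<Rightarrow> 'a \<Rightarrow> 'a) \<Rightarrow>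
   ('a tens \<Rightarrow> 'a tens) \<Rightarrow> ('a tens \<Rightarrow> 'a tens) \<Rightarrow> bool" where
  "tmultiplier s m l r \<longleftrightarrow>
     (\<forall>t u. teq s t u \<longrightarrow> teq s (l t) (l u) \<and> teq s (r t) (r u)) \<and>
     (\<forall>t u. teq s (l (t @ u)) (l t @ l u) \<and> teq s (r (t @ u)) (r t @ r u)) \<and>
     (\<forall>c t. teq s (l (tscale s c t)) (tscale s c (l t)) \<and> teq s (r (tscale s c t)) (tscale s c (r t))) \<and>
     (\<forall>t u. teq s (l (tmul m t u)) (tmul m (l t) u)) \<and>
     (\<forall>t u. teq s (r (tmul m t u)) (tmul m t (r u))) \<and>
     (\<forall>t u. teq s (tmul m t (l u)) (tmul m (r t) u))"

text \<open>The four "covered" elements, as elements of A \<otimes> A: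
  D1 a b t : t = \<Delta>(a)(1 \<otimes> b);   D2 a b t : t = (a \<otimes> 1)\<Delta>(b);
  D3 a b t : t = \<Delta>(a)(b \<otimes> 1);   D4 a b t : t = (1 \<otimes> b)\<Delta>(a).
  An element of A \<otimes> A is identified with a multiplier via its left
  (resp. right) multiplication.\<close>

definition isD1 where
  "isD1 s m DL a b t \<longleftrightarrow> (\<forall>c d. teq s (tmul m t [(c, d)]) (DL a [(c, m b d)]))"
definition isD2 where
  "isD2 s m DR a b t \<longleftrightarrow> (\<forall>c d. teq s (tmul m [(c, d)] t) (DR b [(m c a, d)]))"
definition isD3 where
  "isD3 s m DL a b t \<longleftrightarrow> (\<forall>c d. teq s (tmul m t [(c, d)]) (DL a [(m b c, d)]))"
definition isD4 where
  "isD4 s m DR a b t \<longleftrightarrow> (\<forall>c d. teq s (tmul m [(c, d)] t) (DR a [(c, m d b)]))"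

definition D1 where "D1 s m DL a b = (SOME t. isD1 s m DL a b t)"
definition D2 where "D2 s m DR a b = (SOME t. isD2 s m DR a b t)"
definition D3 where "D3 s m DL a b = (SOME t. isD3 s m DL a b t)"
definition D4 where "D4 s m DR a b = (SOME t. isD4 s m DR a b t)"

definition text_map :: "('a \<Rightarrow> 'a \<Rightarrow> 'a tens) \<Rightarrow> 'a tens \<Rightarrow> 'a tens" where
  "text_map T t = concat (map (\<lambda>(a, b). T a b) t)"

definition tbij :: "('k::field \<Rightarrow> 'a::ab_group_add \<Rightarrow> 'a) \<Rightarrow> ('a tens \<Rightarrow> 'a tens) \<Rightarrow> bool" where
  "tbij s T \<longleftrightarrow> (\<forall>t u. teq s (T t) (T u) \<longrightarrow> teq s t u) \<and> (\<forall>u. \<exists>t. teq s (T t) u)"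

text \<open>Multiplier Hopf algebra (Van Daele): nondegenerate algebra A, homomorphism
  \<Delta> : A \<rightarrow> M(A \<otimes> A) with \<Delta>(a)(1 \<otimes> b), (a \<otimes> 1)\<Delta>(b) \<in> A \<otimes> A,
  coassociative, with T1(a \<otimes> b) = \<Delta>(a)(1 \<otimes> b), T2(a \<otimes> b) = (a \<otimes> 1)\<Delta>(b)
  bijective. Regular: the same holds for the opposite comultiplication, i.e.
  \<Delta>(a)(b \<otimes> 1), (1 \<otimes> b)\<Delta>(a) \<in> A \<otimes> A and a \<otimes> b \<mapsto> \<Delta>(a)(b \<otimes> 1),
  a \<otimes> b \<mapsto> (1 \<otimes> a)\<Delta>(b) bijective. eps is the counit, S the antipode
  (characterised by their defining identities), S is bijective.\<close>

definition reg_mult_hopf ::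
  "('k::field \<Rightarrow> 'a::ab_group_add \<Rightarrow> 'a) \<Rightarrow> ('a \<Rightarrow> 'a \<Rightarrow> 'a) \<Rightarrow>
   ('a \<Rightarrow> 'a tens \<Rightarrow> 'a tens) \<Rightarrow> ('a \<Rightarrow> 'a tens \<Rightarrow> 'a tens) \<Rightarrow> ('a \<Rightarrow> 'k) \<Rightarrow> ('a \<Rightarrow> 'a) \<Rightarrow> bool" where
  "reg_mult_hopf s m DL DR eps S \<longleftrightarrow>
     algebra s m \<and> nondeg_on m UNIV \<and>
     \<comment> \<open>\<Delta> is a linear map into M(A \<otimes> A)\<close>
     (\<forall>a. tmultiplier s m (DL a) (DR a)) \<and>
     (\<forall>a b t. teq s (DL (a + b) t) (DL a t @ DL b t) \<and> teq s (DR (a + b) t) (DR a t @ DR b t)) \<and>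
     (\<forall>c a t. teq s (DL (s c a) t) (tscale s c (DL a t)) \<and> teq s (DR (s c a) t) (tscale s c (DR a t))) \<and>
     \<comment> \<open>\<Delta> is multiplicative\<close>
     (\<forall>a b t. teq s (DL (m a b) t) (DL a (DL b t)) \<and> teq s (DR (m a b) t) (DR b (DR a t))) \<and>
     \<comment> \<open>covering conditions\<close>
     (\<forall>a b. \<exists>t. isD1 s m DL a b t) \<and> (\<forall>a b. \<exists>t. isD2 s m DR a b t) \<and>
     (\<forall>a b. \<exists>t. isD3 s m DL a b t) \<and> (\<forall>a b. \<exists>t. isD4 s m DR a b t) \<and>
     \<comment> \<open>coassociativity: (a\<otimes>1\<otimes>1)(\<Delta>\<otimes>\<iota>)(\<Delta>(b)(1\<otimes>c)) = (\<iota>\<otimes>\<Delta>)((a\<otimes>1)\<Delta>(b))(1\<otimes>1\<otimes>c)\<close>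
     (\<forall>a b c. teq3 s
        (concat (map (\<lambda>(x, y). map (\<lambda>(p, q). (p, q, y)) (D2 s m DR a x)) (D1 s m DL b c)))
        (concat (map (\<lambda>(u, v). map (\<lambda>(p, q). (u, p, q)) (D1 s m DL v c)) (D2 s m DR a b)))) \<and>
     \<comment> \<open>bijectivity of T1, T2 and of their regular counterparts\<close>
     tbij s (text_map (D1 s m DL)) \<and> tbij s (text_map (D2 s m DR)) \<and>
     tbij s (text_map (D3 s m DL)) \<and> tbij s (text_map (\<lambda>a b. D4 s m DR b a)) \<and>
     \<comment> \<open>counit\<close>
     Vector_Spaces.linear s (*) eps \<and>
     (\<forall>a b. teval (\<lambda>x y. s (eps x) y) (D1 s m DL a b) = m a b) \<and>
     (\<forall>a b. teval (\<lambda>x y. s (eps y) x) (D2 s m DR a b) = m a b) \<and>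
     \<comment> \<open>antipode\<close>
     Vector_Spaces.linear s s S \<and>
     (\<forall>a b. teval (\<lambda>x y. m (S x) y) (D1 s m DL a b) = s (eps a) b) \<and>
     (\<forall>a b. teval (\<lambda>x y. m x (S y)) (D2 s m DR a b) = s (eps b) a) \<and>
     bij S"

text \<open>act a x = a \<cdot> x; (eL a, eR a) = e(a) \<in> M(R), i.e. eL a x = e(a)x and
  eR a x = xe(a). R is an algebra with nondegenerate product (standing
  assumption for M(R)). Sweedler notation is resolved through the covering
  elements: a_(1) \<otimes> a_(2)b = \<Delta>(a)(1 \<otimes> b);  a_(1) \<otimes> S(a_(2))b is
  (\<iota>\<otimes>S)((1 \<otimes> S^-1(b))\<Delta>(a));  a_(1)b \<otimes> a_(2) = \<Delta>(a)(b \<otimes> 1);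
  S^-1(a_(1))b \<otimes> a_(2) is (S^-1\<otimes>\<iota>)((S(b) \<otimes> 1)\<Delta>(a)).\<close>

definition actR :: "('a \<Rightarrow> 'r \<Rightarrow> 'r) \<Rightarrow> 'r set" where
  "actR act = {act a x | a x. True}"

definition partial_mod_alg ::
  "('k::field \<Rightarrow> 'a::ab_group_add \<Rightarrow> 'a) \<Rightarrow> ('a \<Rightarrow> 'a \<Rightarrow> 'a) \<Rightarrow>
   ('a \<Rightarrow> 'a tens \<Rightarrow> 'a tens) \<Rightarrow> ('a \<Rightarrow> 'a tens \<Rightarrow> 'a tens) \<Rightarrow> ('a \<Rightarrow> 'a) \<Rightarrow>
   ('k \<Rightarrow> 'r::ab_group_add \<Rightarrow> 'r) \<Rightarrow> ('r \<Rightarrow> 'r \<Rightarrow> 'r) \<Rightarrow>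
   ('a \<Rightarrow> 'r \<Rightarrow> 'r) \<Rightarrow> ('a \<Rightarrow> 'r \<Rightarrow> 'r) \<Rightarrow> ('a \<Rightarrow> 'r \<Rightarrow> 'r) \<Rightarrow> bool" where
  "partial_mod_alg sa mA DL DR S sr mR act eL eR \<longleftrightarrow>
     algebra sr mR \<and> nondeg_on mR UNIV \<and>
     bilin sa sr sr act \<and>
     (\<forall>a. multiplier sr mR (eL a) (eR a)) \<and>
     (\<forall>a b x. eL (a + b) x = eL a x + eL b x \<and> eR (a + b) x = eR a x + eR b x) \<and>
     (\<forall>c a x. eL (sa c a) x = sr c (eL a x) \<and> eR (sa c a) x = sr c (eR a x)) \<and>
     \<comment> \<open>(i)\<close>
     (\<forall>a b x y. act a (mR x (act b y)) =
        teval (\<lambda>c d. mR (act c x) (act d y)) (D1 sa mA DL a b)) \<and>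
     \<comment> \<open>(ii)\<close>
     (\<forall>a b x. eL a (act b x) =
        teval (\<lambda>c d. act c (act (S d) x)) (D4 sa mA DR a (inv S b))) \<and>
     module.span sr {eL a x | a x. True} \<subseteq> module.span sr (actR act) \<and>
     \<comment> \<open>(iii)\<close>
     (\<forall>F G. finite F \<longrightarrow> finite G \<longrightarrow>
        (\<exists>b. \<forall>a\<in>F. mA a b = a \<and> mA b a = a \<and> (\<forall>x\<in>G. act a x = act a (act b x)))) \<and>
     \<comment> \<open>(iv)\<close>
     (\<forall>x. (\<forall>a. act a x = 0) \<longrightarrow> x = 0)"

definition sym_partial_mod_alg where
  "sym_partial_mod_alg sa mA DL DR S sr mR act eL eR \<longleftrightarrow>
     partial_mod_alg sa mA DL DR S sr mR act eL eR \<and>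
     \<comment> \<open>(v)\<close>
     (\<forall>a b x y. act a (mR (act b x) y) =
        teval (\<lambda>c d. mR (act c x) (act d y)) (D3 sa mA DL a b)) \<and>
     \<comment> \<open>(vi)\<close>
     (\<forall>a b x. eR a (act b x) =
        teval (\<lambda>c d. act d (act (inv S c) x)) (D2 sa mA DR (S b) a)) \<and>
     \<comment> \<open>(vii)\<close>
     module.span sr {eR a x | a x. True} \<subseteq> module.span sr (actR act)"

end

theory Submission
  imports Defs
begin

text \<open>The inclusions of the spans of e(A)R and R e(A) in that of A\<cdot>R are axioms,
  so only the converse ones need proof. Given a\<cdot>x, choose a local unit b with
  a\<cdot>x = a\<cdot>(b\<cdot>x). By bijectivity of the regular Galois map
  p \<otimes> r \<mapsto> (1 \<otimes> r)\<Delta>(p), the tensor a \<otimes> S\<inverse>(b) is a sum of values of that map; feeding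
  these into axiom (ii) writes a\<cdot>(S(S\<inverse> b)\<cdot>x) = a\<cdot>x as a sum of elements
  e(p)(S(r)\<cdot>x). Symmetrically, bijectivity of T2 applied to S(b) \<otimes> a and
  axiom (vi) write a\<cdot>x as a sum of elements (S\<inverse>(c)\<cdot>x)e(d).\<close>

lemma linear_functional_nonzero:
  assumes "Vector_Spaces.vector_space sr" and "v \<noteq> 0"
  shows "\<exists>\<phi>. Vector_Spaces.linear sr (*) \<phi> \<and> \<phi> v \<noteq> (0::'k::field)"
proof -
  interpret vector_space sr by fact
  obtain B where B: "independent B" "UNIV \<subseteq> span B"
    using basis_exists[of UNIV] by metis
  have "\<exists>b. representation B v b \<noteq> 0"
  proof (rule ccontr)
    assume "\<not> ?thesis"
    hence "(\<Sum>b | representation B v b \<noteq> 0. sr (representation B v b) b) = 0" by simp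
    moreover have "(\<Sum>b | representation B v b \<noteq> 0. sr (representation B v b) b) = v"
      using B by (intro sum_nonzero_representation_eq) auto
    ultimately show False using \<open>v \<noteq> 0\<close> by simp
  qed
  moreover have "Vector_Spaces.linear sr (*) (\<lambda>v. representation B v b)" for b
    using B by (intro linear_representation) auto
  ultimately show ?thesis by blast
qed

lemma teval_additive:
  fixes \<phi> :: "'r::ab_group_add \<Rightarrow> 'c::ab_group_add"
  assumes add: "\<And>x y. \<phi> (x + y) = \<phi> x + \<phi> y"
  shows "teval (\<lambda>x y. \<phi> (G x y)) t = \<phi> (teval G t)"
proof -
  have "\<phi> 0 = 0" using add[of 0 0] by simp
  then show ?thesis by (induction t) (auto simp: teval_def add)
qed

text \<open>Vector-valued bilinear maps are well defined on tensors, although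
  teq only refers to scalar-valued ones: compose with a functional
  separating the two values.\<close>
lemma teval_teq:
  fixes sa :: "'k::field \<Rightarrow> 'a::ab_group_add \<Rightarrow> 'a"
    and sr :: "'k \<Rightarrow> 'r::ab_group_add \<Rightarrow> 'r"
  assumes vs: "Vector_Spaces.vector_space sr" and G: "bilin sa sa sr G"
    and tu: "teq sa t u"
  shows "teval G t = teval G u"
proof (rule ccontr)
  assume "teval G t \<noteq> teval G u"
  then obtain \<phi> :: "'r \<Rightarrow> 'k" where lin: "Vector_Spaces.linear sr (*) \<phi>"
    and nz: "\<phi> (teval G t - teval G u) \<noteq> 0"
    using linear_functional_nonzero[OF vs, of "teval G t - teval G u"] by auto
  have add: "\<phi> (x + y) = \<phi> x + \<phi> y" and scale: "\<phi> (sr c x) = c * \<phi> x" for x y c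
    using lin unfolding Vector_Spaces.linear_iff by auto
  have "bilin sa sa (*) (\<lambda>x y. \<phi> (G x y))"
    using G unfolding bilin_def by (auto simp: add scale)
  hence "teval (\<lambda>x y. \<phi> (G x y)) t = teval (\<lambda>x y. \<phi> (G x y)) u"
    using tu unfolding teq_def by blast
  hence "\<phi> (teval G t) = \<phi> (teval G u)" by (simp add: teval_additive[OF add])
  moreover have "\<phi> (teval G t - teval G u) = \<phi> (teval G t) - \<phi> (teval G u)"
    using add[of "teval G t - teval G u" "teval G u"] by simp
  ultimately show False using nz by simp
qed

lemma teval_text_map:
  "teval G (text_map T u) = sum_list (map (\<lambda>(r, p). teval G (T r p)) u)"
  by (induction u) (auto simp: teval_def text_map_def)

lemma teval_in_span_if_tbij:
  assumes vs: "Vector_Spaces.vector_space sr" and G: "bilin sa sa sr G"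
    and T: "tbij sa (text_map T)"
    and img: "\<And>r p. teval G (T r p) \<in> module.span sr E"
  shows "teval G t \<in> module.span sr E"
proof -
  interpret vector_space sr by (rule vs)
  obtain u where u: "teq sa (text_map T u) t"
    using T unfolding tbij_def by blast
  have "sum_list (map (\<lambda>(r, p). teval G (T r p)) u) \<in> span E"
    by (induction u) (auto intro: span_zero span_add img)
  then show ?thesis
    using teval_teq[OF vs G u] by (simp add: teval_text_map)
qed

lemma linear_inv_bij:
  assumes lin: "Vector_Spaces.linear s s S" and "bij S"
  shows "Vector_Spaces.linear s s (inv S)"
proof -
  have S_inv: "S (inv S z) = z" and inv_S: "inv S (S z) = z" for z
    using \<open>bij S\<close> by (simp_all add: bij_def surj_f_inv_f)
  have add: "S (x + y) = S x + S y" and scale: "S (s c x) = s c (S x)" for x y c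
    using lin unfolding Vector_Spaces.linear_iff by auto
  have "inv S (x + y) = inv S x + inv S y" for x y
    using inv_S[of "inv S x + inv S y"] by (simp add: add S_inv)
  moreover have "inv S (s c x) = s c (inv S x)" for c x
    using inv_S[of "s c (inv S x)"] by (simp add: scale S_inv)
  ultimately show ?thesis
    using lin unfolding Vector_Spaces.linear_iff by blast
qed

lemma partial_mod_alg_local_unit:
  assumes "partial_mod_alg sa mA DL DR S sr mR act eL eR"
  shows "\<exists>b. act a x = act a (act b x)"
proof -
  have "\<forall>F G. finite F \<longrightarrow> finite G \<longrightarrow>
      (\<exists>b. \<forall>a\<in>F. mA a b = a \<and> mA b a = a \<and> (\<forall>x\<in>G. act a x = act a (act b x)))"
    using assms unfolding partial_mod_alg_def by blast
  from this[rule_format, of "{a}" "{x}"] show ?thesis by auto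
qed

lemma actR_subset_span_eL:
  assumes H: "reg_mult_hopf sa mA DL DR eps S"
    and P: "partial_mod_alg sa mA DL DR S sr mR act eL eR"
  shows "actR act \<subseteq> module.span sr {eL a x | a x. True}"
proof
  fix z assume "z \<in> actR act"
  then obtain a x where z: "z = act a x" unfolding actR_def by auto
  obtain b where b: "act a x = act a (act b x)"
    using partial_mod_alg_local_unit[OF P] by blast
  from H have lin_S: "Vector_Spaces.linear sa sa S" and "bij S"
    and T4: "tbij sa (text_map (\<lambda>r p. D4 sa mA DR p r))"
    unfolding reg_mult_hopf_def by auto
  from P have vs: "Vector_Spaces.vector_space sr" and act: "bilin sa sr sr act"
    and ii: "\<And>a b x. eL a (act b x) = teval (\<lambda>c d. act c (act (S d) x)) (D4 sa mA DR a (inv S b))"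
    unfolding partial_mod_alg_def algebra_def by auto
  interpret vector_space sr by (rule vs)
  let ?G = "\<lambda>c d. act c (act (S d) x)"
  have G: "bilin sa sa sr ?G"
    using act lin_S unfolding bilin_def Vector_Spaces.linear_iff by auto
  have img: "teval ?G (D4 sa mA DR p r) = eL p (act (S r) x)" for p r
    using ii[of p "S r" x] \<open>bij S\<close> by (simp add: bij_def)
  have "teval ?G [(a, inv S b)] \<in> module.span sr {eL a x | a x. True}"
    by (rule teval_in_span_if_tbij[OF vs G T4]) (auto simp: img intro: span_base)
  moreover have "teval ?G [(a, inv S b)] = z"
    using \<open>bij S\<close> b z by (simp add: teval_def bij_def surj_f_inv_f)
  ultimately show "z \<in> module.span sr {eL a x | a x. True}" by simp
qed

lemma actR_subset_span_eR:
  assumes H: "reg_mult_hopf sa mA DL DR eps S"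
    and P: "sym_partial_mod_alg sa mA DL DR S sr mR act eL eR"
  shows "actR act \<subseteq> module.span sr {eR a x | a x. True}"
proof
  fix z assume "z \<in> actR act"
  then obtain a x where z: "z = act a x" unfolding actR_def by auto
  have "partial_mod_alg sa mA DL DR S sr mR act eL eR"
    using P unfolding sym_partial_mod_alg_def by blast
  then obtain b where b: "act a x = act a (act b x)"
    using partial_mod_alg_local_unit by blast
  from H have lin_S: "Vector_Spaces.linear sa sa S" and "bij S"
    and T2: "tbij sa (text_map (D2 sa mA DR))"
    unfolding reg_mult_hopf_def by auto
  from P have vs: "Vector_Spaces.vector_space sr" and act: "bilin sa sr sr act"
    and vi: "\<And>a b x. eR a (act b x) = teval (\<lambda>c d. act d (act (inv S c) x)) (D2 sa mA DR (S b) a)"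
    unfolding sym_partial_mod_alg_def partial_mod_alg_def algebra_def by auto
  interpret vector_space sr by (rule vs)
  let ?G = "\<lambda>c d. act d (act (inv S c) x)"
  have G: "bilin sa sa sr ?G"
    using act linear_inv_bij[OF lin_S \<open>bij S\<close>]
    unfolding bilin_def Vector_Spaces.linear_iff by auto
  have img: "teval ?G (D2 sa mA DR c d) = eR d (act (inv S c) x)" for c d
    using vi[of d "inv S c" x] \<open>bij S\<close> by (simp add: bij_def surj_f_inv_f)
  have "teval ?G [(S b, a)] \<in> module.span sr {eR a x | a x. True}"
    by (rule teval_in_span_if_tbij[OF vs G T2]) (auto simp: img intro: span_base)
  moreover have "teval ?G [(S b, a)] = z"
    using \<open>bij S\<close> b z by (simp add: teval_def bij_def)
  ultimately show "z \<in> module.span sr {eR a x | a x. True}" by simp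
qed

theorem mainTheorem12:
  fixes sa :: "'k::field \<Rightarrow> 'a::ab_group_add \<Rightarrow> 'a"
    and mA :: "'a \<Rightarrow> 'a \<Rightarrow> 'a"
    and DL DR :: "'a \<Rightarrow> 'a tens \<Rightarrow> 'a tens"
    and eps :: "'a \<Rightarrow> 'k" and S :: "'a \<Rightarrow> 'a"
    and sr :: "'k \<Rightarrow> 'r::ab_group_add \<Rightarrow> 'r"
    and mR :: "'r \<Rightarrow> 'r \<Rightarrow> 'r"
    and act eL eR :: "'a \<Rightarrow> 'r \<Rightarrow> 'r"
  assumes "reg_mult_hopf sa mA DL DR eps S"
    and "sym_partial_mod_alg sa mA DL DR S sr mR act eL eR"
    and "nondeg_on mR (module.span sr (actR act))"
  shows "module.span sr (actR act) = module.span sr {eL a x | a x. True}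
       \<and> module.span sr (actR act) = module.span sr {eR a x | a x. True}"
proof -
  have P: "partial_mod_alg sa mA DL DR S sr mR act eL eR"
    using assms(2) unfolding sym_partial_mod_alg_def by blast
  then interpret vector_space sr
    unfolding partial_mod_alg_def algebra_def by blast
  have "span (actR act) \<subseteq> span {eL a x | a x. True}"
    using actR_subset_span_eL[OF assms(1) P] by (intro span_minimal) auto
  moreover have "span (actR act) \<subseteq> span {eR a x | a x. True}"
    using actR_subset_span_eR[OF assms(1,2)] by (intro span_minimal) auto
  moreover have "span {eL a x | a x. True} \<subseteq> span (actR act)"
    using P unfolding partial_mod_alg_def by (elim conjE)
  moreover have "span {eR a x | a x. True} \<subseteq> span (actR act)"
    using assms(2) unfolding sym_partial_mod_alg_def by (elim conjE)
  ultimately show ?thesis by blast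
qed

end
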